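(* Let $\varphi:(0,\infty)\to\mathbb{R}$ be $\varphi(s)=\dfrac{s}{\sinh^2(\pi s)}$, and let $V:\mathbb{R}\setminus\{0\}\to\mathbb{R}$ be the even function given for $s>0$ by $$V(s)=\frac{1}{\pi}\,s\coth(\pi s)-\frac{1}{\pi^2}\log\bigl(2\sinh(\pi s)\bigr),$$ and by $V(-s)=V(s)$. For $t>0$ define $\varphi_{\mathrm{eff}}(t):=\sum_{k=1}^\infty k\,\varphi(kt)$. Then $$\lim_{t\to 0^+} t^2\,\varphi_{\mathrm{eff}}(t)=\frac12\int_{-\infty}^{\infty}V(s)\,ds,$$ i.e. $\varphi_{\mathrm{eff}}(t)\approx \dfrac{1}{2t^2}\displaystyle\int_{-\infty}^{\infty}V$ as $t\to0$.
   Context: On $(0,\infty)$, $V$ is the primitive of $-\varphi$ that decays to zero at infinity ($V'=-\varphi$). The function $\varphi$ is the interaction stress between two infinite walls of edge dislocations (with in-wall spacing normalized to $1$), $V$ is the corresponding interaction energy, and $\varphi_{\mathrm{eff}}$ is the effective stress summing the contributions of all $k$-th neighbours in an equispaced array of walls. *)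

theory Defs
  imports "HOL-Analysis.Analysis"
begin

definition phi :: "real \<Rightarrow> real" where
  "phi s = s / (sinh (pi * s))\<^sup>2"

text \<open>Interaction energy: even function on R minus 0; the value at 0 is irrelevant
  (set to 0, a null set for integration).\<close>
definition V :: "real \<Rightarrow> real" where
  "V s = (if s = 0 then 0 else
     (1 / pi) * \<bar>s\<bar> * (cosh (pi * \<bar>s\<bar>) / sinh (pi * \<bar>s\<bar>))
     - (1 / pi\<^sup>2) * ln (2 * sinh (pi * \<bar>s\<bar>)))"

definition phi_eff :: "real \<Rightarrow> real" where
  "phi_eff t = (\<Sum>k. real (Suc k) * phi (real (Suc k) * t))"

end

theory Submission
  imports Defs "HOL-Real_Asymp.Real_Asymp"
begin

text \<open>Put \<psi>(s) = s \<phi>(s) = (s / sinh (\<pi> s))^2, a positive decreasing function on [0, \<infinity>)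
  with integral I over [0, \<infinity>). Then t^2 phi_eff(t) = \<Sum> t \<psi>(k t) is a right Riemann sum of \<psi>
  with mesh t, hence lies between I - t \<psi>(0) and I. On the other side V' = -\<phi> gives
  (s V(s))' = V(s) - \<psi>(s), and s V(s) vanishes both as s \<rightarrow> 0 and as s \<rightarrow> \<infinity>; as V is even, the
  integral of V over the line is 2 I.\<close>

lemma antimono_integral_bounds:
  fixes f :: "real \<Rightarrow> real"
  assumes mono: "antimono_on {a..b} f" and int: "f integrable_on {a..b}" and ab: "a \<le> b"
  shows "(b - a) * f b \<le> integral {a..b} f" "integral {a..b} f \<le> (b - a) * f a"
proof -
  have "integral {a..b} (\<lambda>_. f b) \<le> integral {a..b} f"
    using ab by (intro integral_le int integrable_const_ivl) (auto intro: monotone_onD[OF mono])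
  then show "(b - a) * f b \<le> integral {a..b} f" using ab by simp
  have "integral {a..b} f \<le> integral {a..b} (\<lambda>_. f a)"
    using ab by (intro integral_le int integrable_const_ivl) (auto intro: monotone_onD[OF mono])
  then show "integral {a..b} f \<le> (b - a) * f a" using ab by simp
qed

lemma antimono_Riemann_partial_sum_bounds:
  fixes f :: "real \<Rightarrow> real"
  assumes mono: "antimono_on {0..} f" and int: "\<And>b. f integrable_on {0..b}" and t: "0 < t"
  shows "(\<Sum>j<n. t * f (real (Suc j) * t)) \<le> integral {0..real n * t} f \<and>
         integral {0..real n * t} f \<le> (\<Sum>j<n. t * f (real j * t))"
proof (induction n)
  case (Suc n)
  define a b where "a = real n * t" and "b = real (Suc n) * t"
  have ab: "0 \<le> a" "a \<le> b" "b - a = t" using t by (auto simp: a_def b_def algebra_simps)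
  have strip_int: "f integrable_on {a..b}"
    using ab by (intro integrable_on_subinterval[OF int[of b]]) auto
  have strip_mono: "antimono_on {a..b} f"
    using ab by (intro monotone_on_subset[OF mono]) auto
  note strip = antimono_integral_bounds[OF strip_mono strip_int \<open>a \<le> b\<close>]
  have "integral {0..b} f = integral {0..a} f + integral {a..b} f"
    using ab by (intro Henstock_Kurzweil_Integration.integral_combine[symmetric] int) auto
  with Suc.IH strip ab show ?case by (simp add: a_def b_def)
qed simp

lemma integral_atLeastAtMost_tendsto_at_top:
  fixes f :: "real \<Rightarrow> real"
  assumes int: "f integrable_on {a..}" and nonneg: "\<And>x. a \<le> x \<Longrightarrow> 0 \<le> f x"
  shows "((\<lambda>b. integral {a..b} f) \<longlongrightarrow> integral {a..} f) at_top"
proof (rule tendsto_at_topI_sequentially)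
  fix X :: "nat \<Rightarrow> real" assume X: "filterlim X at_top sequentially"
  define g where "g n x = (if x \<in> {a..X n} then f x else 0)" for n x
  have "(\<lambda>n. integral {a..} (g n)) \<longlonglongrightarrow> integral {a..} f"
  proof (rule dominated_convergence(2)[OF _ int])
    show "g n integrable_on {a..}" for n
      unfolding g_def
      by (subst integrable_restrict_Int) (auto intro: integrable_on_subinterval[OF int])
    show "norm (g n x) \<le> f x" if "x \<in> {a..}" for n x
      using that by (auto simp: g_def nonneg)
    show "(\<lambda>n. g n x) \<longlonglongrightarrow> f x" if "x \<in> {a..}" for x
    proof (rule tendsto_eventually)
      have "\<forall>\<^sub>F n in sequentially. x \<le> X n" using X by (simp add: filterlim_at_top)
      then show "\<forall>\<^sub>F n in sequentially. g n x = f x"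
        by eventually_elim (use that in \<open>simp add: g_def\<close>)
    qed
  qed
  moreover have "integral {a..} (g n) = integral {a..X n} f" for n
    unfolding g_def by (subst integral_restrict_Int) (simp add: Int_absorb2 subset_iff)
  ultimately show "(\<lambda>n. integral {a..X n} f) \<longlonglongrightarrow> integral {a..} f" by simp
qed

lemma antimono_integral_atLeastAtMost_LIMSEQ:
  fixes f :: "real \<Rightarrow> real"
  assumes mono: "antimono_on {0..} f" and nonneg: "\<And>x. 0 \<le> x \<Longrightarrow> 0 \<le> f x"
    and int: "f integrable_on {0..}"
    and a: "\<And>k. 0 \<le> a k" "a \<longlonglongrightarrow> 0" and ab: "\<And>k. a k \<le> b k"
    and b: "filterlim b at_top sequentially"
  shows "(\<lambda>k. integral {a k..b k} f) \<longlonglongrightarrow> integral {0..} f"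
proof -
  have int_ivl: "f integrable_on {0..y}" for y
    by (rule integrable_on_subinterval[OF int]) auto
  have small: "0 \<le> integral {0..a k} f \<and> integral {0..a k} f \<le> a k * f 0" for k
  proof
    show "0 \<le> integral {0..a k} f" by (intro integral_nonneg int_ivl) (simp add: nonneg)
    have "antimono_on {0..a k} f" by (rule monotone_on_subset[OF mono]) auto
    from antimono_integral_bounds(2)[OF this int_ivl a(1)]
    show "integral {0..a k} f \<le> a k * f 0" by simp
  qed
  have "(\<lambda>k. integral {0..a k} f) \<longlonglongrightarrow> 0"
    using small by (intro tendsto_sandwich[OF _ _ tendsto_const
        tendsto_mult_left_zero[OF a(2), where c = "f 0"]]) (simp_all add: always_eventually)
  moreover have "(\<lambda>k. integral {0..b k} f) \<longlonglongrightarrow> integral {0..} f"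
    using filterlim_compose[OF integral_atLeastAtMost_tendsto_at_top[OF int nonneg] b] by simp
  ultimately have "(\<lambda>k. integral {0..b k} f - integral {0..a k} f) \<longlonglongrightarrow> integral {0..} f - 0"
    by (intro tendsto_diff)
  moreover have "integral {0..b k} f - integral {0..a k} f = integral {a k..b k} f" for k
    using Henstock_Kurzweil_Integration.integral_combine[OF a(1) ab int_ivl, of k] by linarith
  ultimately show ?thesis by simp
qed

lemma antimono_Riemann_sum_bounds:
  fixes f :: "real \<Rightarrow> real"
  assumes mono: "antimono_on {0..} f" and nonneg: "\<And>x. 0 \<le> x \<Longrightarrow> 0 \<le> f x"
    and int: "f integrable_on {0..}" and t: "0 < t"
  shows "summable (\<lambda>k. t * f (real (Suc k) * t))"
    and "integral {0..} f - t * f 0 \<le> (\<Sum>k. t * f (real (Suc k) * t))"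
    and "(\<Sum>k. t * f (real (Suc k) * t)) \<le> integral {0..} f"
proof -
  define r where "r k = t * f (real (Suc k) * t)" for k
  have int_ivl: "f integrable_on {0..b}" for b
    by (rule integrable_on_subinterval[OF int]) auto
  note partial = antimono_Riemann_partial_sum_bounds[OF mono int_ivl t]
  have upper: "sum r {..<n} \<le> integral {0..} f" for n
  proof -
    have "integral {0..real n * t} f \<le> integral {0..} f"
      by (intro integral_subset_le int_ivl int) (auto simp: nonneg)
    with partial[of n] show ?thesis by (simp add: r_def)
  qed
  have lower: "integral {0..real (Suc n) * t} f - t * f 0 \<le> sum r {..<n}" for n
  proof -
    have "(\<Sum>j<Suc n. t * f (real j * t)) = t * f 0 + sum r {..<n}"
      by (simp only: sum.lessThan_Suc_shift) (simp add: r_def)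
    with partial[of "Suc n"] show ?thesis by linarith
  qed
  show summable: "summable r"
  proof (rule bounded_imp_summable)
    show "0 \<le> r n" for n using t by (simp add: r_def nonneg)
    show "sum r {..n} \<le> integral {0..} f" for n
      using upper[of "Suc n"] by (simp add: lessThan_Suc_atMost)
  qed
  show "suminf r \<le> integral {0..} f" by (rule suminf_le_const[OF summable upper])
  have "filterlim (\<lambda>n. real (Suc n) * t) at_top sequentially"
    using t by real_asymp
  then have "(\<lambda>n. integral {0..real (Suc n) * t} f) \<longlonglongrightarrow> integral {0..} f"
    using filterlim_compose[OF integral_atLeastAtMost_tendsto_at_top[OF int nonneg]] by blast
  then have "(\<lambda>n. integral {0..real (Suc n) * t} f - t * f 0) \<longlonglongrightarrow> integral {0..} f - t * f 0"
    by (intro tendsto_diff tendsto_const)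
  then show "integral {0..} f - t * f 0 \<le> suminf r"
    by (rule LIMSEQ_le[OF _ summable_LIMSEQ[OF summable]]) (use lower in blast)
qed

lemma antimono_Riemann_sum_tendsto:
  fixes f :: "real \<Rightarrow> real"
  assumes mono: "antimono_on {0..} f" and nonneg: "\<And>x. 0 \<le> x \<Longrightarrow> 0 \<le> f x"
    and int: "f integrable_on {0..}"
  shows "((\<lambda>t. \<Sum>k. t * f (real (Suc k) * t)) \<longlongrightarrow> integral {0..} f) (at_right 0)"
proof (rule tendsto_sandwich)
  show "\<forall>\<^sub>F t in at_right 0. integral {0..} f - t * f 0 \<le> (\<Sum>k. t * f (real (Suc k) * t))"
    using eventually_at_right_less[of 0]
    by eventually_elim (rule antimono_Riemann_sum_bounds(2)[OF assms])
  show "\<forall>\<^sub>F t in at_right 0. (\<Sum>k. t * f (real (Suc k) * t)) \<le> integral {0..} f"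
    using eventually_at_right_less[of 0]
    by eventually_elim (rule antimono_Riemann_sum_bounds(3)[OF assms])
  have "((\<lambda>t. integral {0..} f - t * f 0) \<longlongrightarrow> integral {0..} f - 0 * f 0) (at_right 0)"
    by (intro tendsto_intros)
  then show "((\<lambda>t. integral {0..} f - t * f 0) \<longlongrightarrow> integral {0..} f) (at_right 0)" by simp
qed simp

lemma has_integral_even_annulus:
  fixes f :: "real \<Rightarrow> real"
  assumes even: "\<And>x. f (- x) = f x" and int: "(f has_integral I) {a..b}" and a: "0 < a"
  shows "(f has_integral 2 * I) {x. a \<le> \<bar>x\<bar> \<and> \<bar>x\<bar> \<le> b}"
proof -
  have "((\<lambda>x. f (- x)) has_integral I) {-b..-a}" using int by simp
  then have "(f has_integral I) {-b..-a}" by (simp add: even)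
  moreover have "{-b..-a} \<inter> {a..b} = {}" using a by auto
  ultimately have "(f has_integral I + I) ({-b..-a} \<union> {a..b})"
    by (intro has_integral_Un int) auto
  moreover have "{-b..-a} \<union> {a..b} = {x. a \<le> \<bar>x\<bar> \<and> \<bar>x\<bar> \<le> b}" using a by auto
  ultimately show ?thesis by simp
qed

lemma has_integral_incseq_exhaustion:
  fixes f :: "'a::euclidean_space \<Rightarrow> real"
  assumes incseq: "incseq A" and sub: "\<And>k. A k \<subseteq> S"
    and exhaust: "\<And>x. x \<in> S \<Longrightarrow> \<forall>\<^sub>F k in sequentially. x \<in> A k"
    and nonneg: "\<And>x. x \<in> S \<Longrightarrow> 0 \<le> f x"
    and int: "\<And>k. (f has_integral I k) (A k)" and lim: "I \<longlonglongrightarrow> L"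
  shows "(f has_integral L) S"
proof (rule has_integral_monotone_convergence_increasing[OF _ _ _ lim])
  show "((\<lambda>x. if x \<in> A k then f x else 0) has_integral I k) S" for k
    using int has_integral_restrict[OF sub] by blast
  show "(if x \<in> A k then f x else 0) \<le> (if x \<in> A (Suc k) then f x else 0)" if "x \<in> S" for k x
    using incseqD[OF incseq, of k "Suc k"] nonneg[OF that] by auto
  show "(\<lambda>k. if x \<in> A k then f x else 0) \<longlonglongrightarrow> f x" if "x \<in> S" for x
  proof (rule tendsto_eventually)
    show "\<forall>\<^sub>F k in sequentially. (if x \<in> A k then f x else 0) = f x"
      using exhaust[OF that] by eventually_elim simp
  qed
qed

lemma sinh_le_mult_cosh:
  fixes x :: real assumes "0 \<le> x" shows "sinh x \<le> x * cosh x"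
proof -
  have "0 * cosh 0 - sinh 0 \<le> x * cosh x - sinh x"
  proof (rule DERIV_nonneg_imp_increasing_open[OF assms])
    fix y :: real assume "0 < y"
    have "((\<lambda>u. u * cosh u - sinh u) has_real_derivative y * sinh y) (at y)"
      by (auto intro!: derivative_eq_intros)
    moreover have "0 \<le> y * sinh y" using \<open>0 < y\<close> by simp
    ultimately show "\<exists>d. ((\<lambda>u. u * cosh u - sinh u) has_real_derivative d) (at y) \<and> 0 \<le> d"
      by blast
  qed (intro continuous_intros)
  then show ?thesis by simp
qed

lemma sinh_ge_quadratic:
  fixes x :: real assumes "0 \<le> x" shows "x / 2 + x\<^sup>2 / 4 \<le> sinh x"
proof -
  have "1 + x + x\<^sup>2 / 2 \<le> exp x" using assms by (rule exp_lower_Taylor_quadratic)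
  moreover have "exp (- x) \<le> 1" using assms by simp
  ultimately have "x + x\<^sup>2 / 2 \<le> exp x - exp (- x)" by linarith
  then show ?thesis unfolding sinh_field_def by (simp add: field_simps)
qed

definition s_over_sinh :: "real \<Rightarrow> real" where
  "s_over_sinh s = (if s = 0 then 1 / pi else s / sinh (pi * s))"

definition s_phi :: "real \<Rightarrow> real" where
  "s_phi s = (s_over_sinh s)\<^sup>2"

lemma s_phi_eq: "0 < s \<Longrightarrow> s_phi s = s * phi s"
  by (simp add: s_phi_def s_over_sinh_def phi_def power2_eq_square)

lemma s_phi_nonneg: "0 \<le> s_phi s"
  by (simp add: s_phi_def)

lemma s_over_sinh_pos: "0 \<le> s \<Longrightarrow> 0 < s_over_sinh s"
  by (simp add: s_over_sinh_def)

lemma isCont_s_over_sinh: "isCont s_over_sinh x"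
proof (cases "x = 0")
  case True
  have "((\<lambda>s. s / sinh (pi * s)) \<longlongrightarrow> inverse pi) (at 0)" by real_asymp
  moreover have "\<forall>\<^sub>F s in at 0. s / sinh (pi * s) = s_over_sinh s"
    by (simp add: eventually_at_filter s_over_sinh_def)
  ultimately have "(s_over_sinh \<longlongrightarrow> inverse pi) (at 0)" by (rule Lim_transform_eventually)
  with True show ?thesis by (simp add: isCont_def s_over_sinh_def divide_inverse)
next
  case False
  have "\<forall>\<^sub>F s in nhds x. s / sinh (pi * s) = s_over_sinh s"
    using t1_space_nhds[OF False] by eventually_elim (simp add: s_over_sinh_def)
  moreover have "isCont (\<lambda>s. s / sinh (pi * s)) x"
    using False by (intro continuous_intros) simp
  ultimately show ?thesis by (simp add: isCont_cong)
qed

lemma continuous_on_s_phi: "continuous_on A s_phi"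
  unfolding s_phi_def
  by (intro continuous_intros continuous_at_imp_continuous_on ballI isCont_s_over_sinh)

lemma s_over_sinh_has_derivative:
  assumes "0 < x"
  shows "(s_over_sinh has_real_derivative
           (sinh (pi * x) - pi * x * cosh (pi * x)) / (sinh (pi * x))\<^sup>2) (at x)"
proof (rule has_field_derivative_transform_within_open[where S = "{0<..}"])
  show "((\<lambda>s. s / sinh (pi * s)) has_real_derivative
          (sinh (pi * x) - pi * x * cosh (pi * x)) / (sinh (pi * x))\<^sup>2) (at x)"
    using assms by (auto intro!: derivative_eq_intros simp: power2_eq_square)
qed (use assms in \<open>auto simp: s_over_sinh_def\<close>)

lemma antimono_s_over_sinh: "antimono_on {0..} s_over_sinh"
proof (rule monotone_onI)
  fix a b :: real assume "a \<in> {0..}" "b \<in> {0..}" "a \<le> b"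
  show "s_over_sinh b \<le> s_over_sinh a"
  proof (rule DERIV_nonpos_imp_decreasing_open[OF \<open>a \<le> b\<close>])
    fix x assume "a < x"
    with \<open>a \<in> {0..}\<close> have x: "0 < x" by simp
    have "sinh (pi * x) \<le> pi * x * cosh (pi * x)" using x by (intro sinh_le_mult_cosh) simp
    then have "(sinh (pi * x) - pi * x * cosh (pi * x)) / (sinh (pi * x))\<^sup>2 \<le> 0"
      by (intro divide_nonpos_nonneg) auto
    with s_over_sinh_has_derivative[OF x]
    show "\<exists>d. (s_over_sinh has_real_derivative d) (at x) \<and> d \<le> 0" by blast
  qed (intro continuous_at_imp_continuous_on ballI isCont_s_over_sinh)
qed

lemma antimono_s_phi: "antimono_on {0..} s_phi"
proof (rule monotone_onI)
  fix a b :: real assume "a \<in> {0..}" "b \<in> {0..}" "a \<le> b"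
  then have "s_over_sinh b \<le> s_over_sinh a" "0 < s_over_sinh b"
    by (auto intro: monotone_onD[OF antimono_s_over_sinh] s_over_sinh_pos)
  then show "s_phi b \<le> s_phi a" unfolding s_phi_def by (intro power_mono) auto
qed

lemma s_phi_le: assumes "0 \<le> s" shows "s_phi s \<le> 16 / (2 * pi + pi\<^sup>2 * s)\<^sup>2"
proof -
  have "s_over_sinh s \<le> 4 / (2 * pi + pi\<^sup>2 * s)"
  proof (cases "s = 0")
    case False
    with assms have s: "0 < s" by simp
    have "s * (2 * pi + pi\<^sup>2 * s) / 4 \<le> sinh (pi * s)"
      using sinh_ge_quadratic[of "pi * s"] s by (simp add: field_simps power2_eq_square)
    moreover have "0 < s * (2 * pi + pi\<^sup>2 * s) / 4" using s by (simp add: add_pos_nonneg)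
    ultimately have "s / sinh (pi * s) \<le> s / (s * (2 * pi + pi\<^sup>2 * s) / 4)"
      using s by (intro divide_left_mono) auto
    with s show ?thesis by (simp add: s_over_sinh_def)
  qed (simp add: s_over_sinh_def field_simps)
  then have "(s_over_sinh s)\<^sup>2 \<le> (4 / (2 * pi + pi\<^sup>2 * s))\<^sup>2"
    using s_over_sinh_pos[OF assms] by (intro power_mono) auto
  then show ?thesis by (simp add: s_phi_def power_divide)
qed

lemma s_phi_bound_has_integral:
  "((\<lambda>s. 16 / (2 * pi + pi\<^sup>2 * s)\<^sup>2) has_integral 8 / pi ^ 3) {0..}"
proof (rule has_integral_to_inf)
  define F where "F u = - (16 / pi\<^sup>2) / (2 * pi + pi\<^sup>2 * u)" for u :: real
  have "((\<lambda>s. 16 / (2 * pi + pi\<^sup>2 * s)\<^sup>2) has_integral F y - F 0) {0..y}" if "0 \<le> y" for y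
  proof (rule fundamental_theorem_of_calculus[OF that])
    fix x assume "x \<in> {0..y}"
    then have "0 < 2 * pi + pi\<^sup>2 * x" by (simp add: add_pos_nonneg)
    then have "(F has_real_derivative - (- (16 / pi\<^sup>2) * pi\<^sup>2 / (2 * pi + pi\<^sup>2 * x)\<^sup>2)) (at x)"
      unfolding F_def by (auto intro!: derivative_eq_intros simp: power2_eq_square)
    then show "(F has_vector_derivative 16 / (2 * pi + pi\<^sup>2 * x)\<^sup>2) (at x within {0..y})"
      by (simp add: has_real_derivative_iff_has_vector_derivative has_vector_derivative_at_within)
  qed
  then have "\<forall>\<^sub>F y in at_top. F y - F 0 = integral {0..y} (\<lambda>s. 16 / (2 * pi + pi\<^sup>2 * s)\<^sup>2)"
    by (intro eventually_at_top_linorderI integral_unique[symmetric])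
  moreover have "((\<lambda>y. F y - F 0) \<longlongrightarrow> 8 / (pi * pi\<^sup>2)) at_top"
    unfolding F_def by real_asymp
  ultimately have "((\<lambda>y. integral {0..y} (\<lambda>s. 16 / (2 * pi + pi\<^sup>2 * s)\<^sup>2)) \<longlongrightarrow> 8 / (pi * pi\<^sup>2)) at_top"
    by (rule Lim_transform_eventually[rotated])
  then show "((\<lambda>y. integral {0..y} (\<lambda>s. 16 / (2 * pi + pi\<^sup>2 * s)\<^sup>2)) \<longlongrightarrow> 8 / pi ^ 3) at_top"
    by (simp add: power_Suc[symmetric])
next
  have "0 < 2 * pi + pi\<^sup>2 * x" if "x \<in> {0..y}" for x y
    using that by (simp add: add_pos_nonneg)
  then show "(\<lambda>s. 16 / (2 * pi + pi\<^sup>2 * s)\<^sup>2) integrable_on {0..y}" for y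
    by (intro integrable_continuous_real continuous_intros) fastforce
qed simp

lemma s_phi_integrable: "s_phi integrable_on {0..}"
proof (rule measurable_bounded_by_integrable_imp_integrable_real)
  show "s_phi \<in> borel_measurable (lebesgue_on {0..})"
    by (intro continuous_imp_measurable_on_sets_lebesgue continuous_on_s_phi) simp
  show "\<bar>s_phi s\<bar> \<le> 16 / (2 * pi + pi\<^sup>2 * s)\<^sup>2" if "s \<in> {0..}" for s
    using s_phi_le that by (simp add: s_phi_nonneg)
qed (use s_phi_bound_has_integral in auto)

lemma V_eq_pos:
  "0 < s \<Longrightarrow> V s = (1 / pi) * s * (cosh (pi * s) / sinh (pi * s)) - (1 / pi\<^sup>2) * ln (2 * sinh (pi * s))"
  by (simp add: V_def)

lemma V_eq_pos_scaled:
  assumes "0 < s"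
  shows "V s = (pi * s * (cosh (pi * s) / sinh (pi * s)) - ln (2 * sinh (pi * s))) / pi\<^sup>2"
proof -
  have "(1 / pi) * s * c - (1 / pi\<^sup>2) * L = (pi * s * c - L) / pi\<^sup>2" for c L :: real
    by (simp add: field_simps power2_eq_square)
  then show ?thesis by (simp only: V_eq_pos[OF assms])
qed

lemma V_minus: "V (- s) = V s"
  by (simp add: V_def)

lemma V_has_derivative: assumes "0 < x" shows "(V has_real_derivative - phi x) (at x)"
proof (rule has_field_derivative_transform_within_open[where S = "{0<..}"])
  have "0 < sinh (pi * x)" using assms by simp
  moreover have "(cosh (pi * x))\<^sup>2 = (sinh (pi * x))\<^sup>2 + 1" by (rule cosh_square_eq)
  ultimately show "((\<lambda>s. (1 / pi) * s * (cosh (pi * s) / sinh (pi * s)) - (1 / pi\<^sup>2) * ln (2 * sinh (pi * s)))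
      has_real_derivative - phi x) (at x)"
    unfolding phi_def using assms
    by (auto intro!: derivative_eq_intros simp: field_simps power2_eq_square
             simp del: sinh_real_pos_iff sinh_real_zero_iff)
qed (use assms in \<open>auto simp: V_eq_pos\<close>)

lemma s_V_tendsto_at_top: "((\<lambda>s. s * V s) \<longlongrightarrow> 0) at_top"
proof -
  let ?W = "\<lambda>x::real. x * (x * (cosh x / sinh x) - ln (2 * sinh x))"
  have "(?W \<longlongrightarrow> 0) at_top"
    by real_asymp
  moreover have "filterlim (\<lambda>s. pi * s) at_top at_top"
    by (rule filterlim_tendsto_pos_mult_at_top[OF tendsto_const pi_gt_zero filterlim_ident])
  ultimately have "((\<lambda>s. ?W (pi * s)) \<longlongrightarrow> 0) at_top"
    by (rule filterlim_compose)
  then have "((\<lambda>s. ?W (pi * s) / pi ^ 3) \<longlongrightarrow> 0 / pi ^ 3) at_top"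
    by (intro tendsto_divide tendsto_const) simp_all
  moreover have "\<forall>\<^sub>F s in at_top. ?W (pi * s) / pi ^ 3 = s * V s"
    using eventually_gt_at_top[of 0]
  proof eventually_elim
    case (elim s)
    have "x * (x * c - L) / pi ^ 3 = s * ((x * c - L) / pi\<^sup>2)" if "x = pi * s" for x c L :: real
      using that by (simp add: field_simps power2_eq_square power3_eq_cube)
    then show ?case by (simp only: V_eq_pos_scaled[OF elim])
  qed
  ultimately show ?thesis by (simp add: Lim_transform_eventually)
qed

lemma s_V_tendsto_0: "((\<lambda>s. s * V s) \<longlongrightarrow> 0) (at_right 0)"
proof -
  let ?C = "\<lambda>s::real. s * ((1 / pi) * s * (cosh (pi * s) / sinh (pi * s)))"
  let ?L = "\<lambda>s::real. s * ln (2 * sinh (pi * s))"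
  have "(?C \<longlongrightarrow> 0) (at_right 0)" by real_asymp
  moreover have "(?L \<longlongrightarrow> 0) (at_right 0)" by real_asymp
  ultimately have "((\<lambda>s. ?C s - (1 / pi\<^sup>2) * ?L s) \<longlongrightarrow> 0 - (1 / pi\<^sup>2) * 0) (at_right 0)"
    by (intro tendsto_diff tendsto_mult tendsto_const)
  moreover have "\<forall>\<^sub>F s in at_right 0. ?C s - (1 / pi\<^sup>2) * ?L s = s * V s"
    using eventually_at_right_less[of 0]
  proof eventually_elim
    case (elim s)
    have "s * (a * c - b * L) = s * a * c - b * (s * L)" for a b c L :: real
      by (simp add: algebra_simps)
    then show ?case by (simp only: V_eq_pos[OF elim] mult.assoc)
  qed
  ultimately show ?thesis by (simp add: Lim_transform_eventually)
qed

lemma V_nonneg: "0 \<le> V s"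
proof -
  have pos: "0 \<le> V x" if x: "0 < x" for x
  proof (rule tendsto_le[OF trivial_limit_at_top_linorder tendsto_const])
    have "\<forall>\<^sub>F y in at_top. (y * V y) * inverse y = V y"
      using eventually_gt_at_top[of 0] by eventually_elim simp
    moreover have "((\<lambda>y. (y * V y) * inverse y) \<longlongrightarrow> 0 * 0) at_top"
      by (intro tendsto_mult s_V_tendsto_at_top tendsto_inverse_0_at_top filterlim_ident)
    ultimately show "(V \<longlongrightarrow> 0) at_top" by (simp add: Lim_transform_eventually)
    show "\<forall>\<^sub>F y in at_top. V y \<le> V x"
    proof (rule eventually_at_top_linorderI)
      fix y assume "x \<le> y"
      show "V y \<le> V x"
      proof (rule DERIV_nonpos_imp_nonincreasing[OF \<open>x \<le> y\<close>])
        fix z assume "x \<le> z"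
        with x have "0 < z" by simp
        then show "\<exists>d. (V has_real_derivative d) (at z) \<and> d \<le> 0"
          using V_has_derivative[of z] by (intro exI[of _ "- phi z"]) (simp add: phi_def)
      qed
    qed
  qed
  moreover have "V s = V \<bar>s\<bar>" by (simp add: V_def)
  ultimately show ?thesis by (cases "s = 0") (auto simp: V_def)
qed

lemma V_has_integral_atLeastAtMost:
  assumes a: "0 < a" and ab: "a \<le> b"
  shows "(V has_integral b * V b - a * V a + integral {a..b} s_phi) {a..b}"
proof -
  have "((\<lambda>s. V s - s_phi s) has_integral b * V b - a * V a) {a..b}"
  proof (rule fundamental_theorem_of_calculus[OF ab])
    fix x assume "x \<in> {a..b}"
    with a have x: "0 < x" by simp
    have "((\<lambda>s. s * V s) has_real_derivative x * - phi x + 1 * V x) (at x)"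
      by (rule DERIV_mult'[OF DERIV_ident V_has_derivative[OF x]])
    moreover have "x * - phi x + 1 * V x = V x - s_phi x" by (simp add: s_phi_eq[OF x])
    ultimately have "((\<lambda>s. s * V s) has_real_derivative V x - s_phi x) (at x)" by (simp only:)
    then show "((\<lambda>s. s * V s) has_vector_derivative V x - s_phi x) (at x within {a..b})"
      by (simp add: has_real_derivative_iff_has_vector_derivative has_vector_derivative_at_within)
  qed
  moreover have "(s_phi has_integral integral {a..b} s_phi) {a..b}"
    by (intro integrable_integral integrable_continuous_real continuous_on_s_phi)
  ultimately have "((\<lambda>s. (V s - s_phi s) + s_phi s) has_integral
      (b * V b - a * V a) + integral {a..b} s_phi) {a..b}"
    by (rule has_integral_add)
  then show ?thesis by simp
qed

lemma V_has_integral: "(V has_integral 2 * integral {0..} s_phi) UNIV"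
proof -
  define a b :: "nat \<Rightarrow> real" where "a k = 1 / real (Suc k)" and "b k = real (Suc k)" for k
  define A where "A k = {x. a k \<le> \<bar>x\<bar> \<and> \<bar>x\<bar> \<le> b k}" for k
  define I where "I k = 2 * (b k * V (b k) - a k * V (a k) + integral {a k..b k} s_phi)" for k
  have ab: "0 < a k" "a k \<le> b k" for k by (auto simp: a_def b_def field_simps)
  have a_to_0: "a \<longlonglongrightarrow> 0" and a_lim: "filterlim a (at_right 0) sequentially"
    and b_lim: "filterlim b at_top sequentially"
    unfolding a_def b_def by real_asymp+
  have lim_ab: "(\<lambda>k. integral {a k..b k} s_phi) \<longlonglongrightarrow> integral {0..} s_phi"
    by (rule antimono_integral_atLeastAtMost_LIMSEQ[OF antimono_s_phi _ s_phi_integrable _ a_to_0 ab(2) b_lim])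
       (simp_all add: s_phi_nonneg less_imp_le[OF ab(1)])
  have lim_bV: "(\<lambda>k. b k * V (b k)) \<longlonglongrightarrow> 0"
    using filterlim_compose[OF s_V_tendsto_at_top b_lim] by simp
  have lim_aV: "(\<lambda>k. a k * V (a k)) \<longlonglongrightarrow> 0"
    using filterlim_compose[OF s_V_tendsto_0 a_lim] by simp
  have "I \<longlonglongrightarrow> 2 * (0 - 0 + integral {0..} s_phi)"
    unfolding I_def by (rule tendsto_mult[OF tendsto_const tendsto_add[OF tendsto_diff[OF lim_bV lim_aV] lim_ab]])
  then have I_lim: "I \<longlonglongrightarrow> 2 * integral {0..} s_phi" by simp
  have "(V has_integral 2 * integral {0..} s_phi) (- {0})"
  proof (rule has_integral_incseq_exhaustion[where A = A and I = I])
    have "a (Suc k) \<le> a k" "b k \<le> b (Suc k)" for k by (simp_all add: a_def b_def frac_le)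
    then show "incseq A" by (intro incseq_SucI) (auto simp: A_def intro: order_trans)
    show "(V has_integral I k) (A k)" for k
      unfolding A_def I_def by (intro has_integral_even_annulus V_minus V_has_integral_atLeastAtMost ab)
    show "A k \<subseteq> - {0}" for k using ab(1)[of k] by (auto simp: A_def)
    show "\<forall>\<^sub>F k in sequentially. x \<in> A k" if "x \<in> - {0}" for x
    proof -
      have "\<forall>\<^sub>F k in sequentially. a k < \<bar>x\<bar>" using that by (intro order_tendstoD(2)[OF a_to_0]) simp
      moreover have "\<forall>\<^sub>F k in sequentially. \<bar>x\<bar> \<le> b k" using b_lim by (simp add: filterlim_at_top)
      ultimately show ?thesis by eventually_elim (simp add: A_def)
    qed
  qed (simp_all add: V_nonneg I_lim)
  moreover have "negligible {x \<in> - {0} - UNIV. V x \<noteq> 0}" "negligible {x \<in> UNIV - - {0}. V x \<noteq> 0}"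
    by (simp_all add: V_def)
  ultimately show ?thesis using has_integral_spike_set_eq by blast
qed

lemma t2_phi_eff_eq:
  assumes t: "0 < t"
  shows "t\<^sup>2 * phi_eff t = (\<Sum>k. t * s_phi (real (Suc k) * t))"
proof -
  have summand: "t * s_phi (real (Suc k) * t) = t\<^sup>2 * (real (Suc k) * phi (real (Suc k) * t))" for k
    using s_phi_eq[of "real (Suc k) * t"] t by (simp add: power2_eq_square)
  have "summable (\<lambda>k. t * s_phi (real (Suc k) * t))"
    by (rule antimono_Riemann_sum_bounds(1)[OF antimono_s_phi _ s_phi_integrable t]) (simp add: s_phi_nonneg)
  then have "summable (\<lambda>k. t\<^sup>2 * (real (Suc k) * phi (real (Suc k) * t)))"
    by (simp only: summand)
  then have "summable (\<lambda>k. real (Suc k) * phi (real (Suc k) * t))"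
    using t by (simp add: summable_cmult_iff)
  then show ?thesis unfolding phi_eff_def summand by (rule suminf_mult[symmetric])
qed

theorem mainTheorem1:
  shows "V integrable_on UNIV \<and>
         ((\<lambda>t. t\<^sup>2 * phi_eff t) \<longlongrightarrow> (1/2) * integral UNIV V) (at_right 0)"
proof
  show "V integrable_on UNIV" using V_has_integral by blast
  have "((\<lambda>t. \<Sum>k. t * s_phi (real (Suc k) * t)) \<longlongrightarrow> integral {0..} s_phi) (at_right 0)"
    by (rule antimono_Riemann_sum_tendsto[OF antimono_s_phi _ s_phi_integrable]) (simp add: s_phi_nonneg)
  moreover have "\<forall>\<^sub>F t in at_right 0. (\<Sum>k. t * s_phi (real (Suc k) * t)) = t\<^sup>2 * phi_eff t"
    using eventually_at_right_less[of 0] by eventually_elim (simp add: t2_phi_eff_eq)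
  moreover have "(1/2) * integral UNIV V = integral {0..} s_phi"
    using integral_unique[OF V_has_integral] by simp
  ultimately show "((\<lambda>t. t\<^sup>2 * phi_eff t) \<longlongrightarrow> (1/2) * integral UNIV V) (at_right 0)"
    by (simp add: Lim_transform_eventually)
qed

end
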